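(* Let $G$ be a graph without isolated vertices and let $T$ be a solution counting decision tree for $\varphi(G)$. Let $u$ be a node of $T$ labelled by a variable $x$, and let $S\subseteq V(G)$ be such that no two elements of $S$ are adjacent or have a common neighbour in $G$, and no element of $S$ is forced to $1$ by $A_u$. Then $weight(\mathbf{P}^u(S))\leq \alpha^u(S)$.
   Context: $\varphi(G)$ is the CNF on variables $V(G)$ with clauses $(u\vee v)$ for all $\{u,v\}\in E(G)$. Boolean functions are identified with their sets of satisfying assignments (sets of literals); for a set $S$ of literals, the restriction $F|_S$ is the function on the remaining variables whose satisfying assignments are those $S'$ with $S\cup S'$ satisfying $F$. Decision tree for a function $F$ that is not constant false: the root is labelled by some variable $x\in Var(F)$; for each literal $\ell\in\{x,\neg x\}$ occurring in some satisfying assignment of $F$, the root has an outgoing edge labelled $\ell$; if $|Var(F)|=1$ its head is an unlabelled leaf, otherwise its head is the root of a decision tree for $F|_\ell$. A solution counting decision tree (SCDT) for $F$ is a decision tree for $F$ in which an edge leaving node $w$ labelled by literal $\ell$ has weight $|F|_{A_w\cup\{\ell\}}|/|F|_{A_w}|$, where $A_w$ is the set of literals labelling the root-$w$ path. The weight of a path is the product of its edge weights, and the weight of a set of paths is the sum of their weights. A variable $y\in V(G)$ is forced to $1$ by $A_u$ if some neighbour $z$ of $y$ in $G$ satisfies $\neg z\in A_u$. $N^u(y)$ is the set of neighbours $z$ of $y$ such that $z$ does not occur in $A_u$ and $z$ is not forced to $1$ by $A_u$. For $d\geq 0$, $c_d=1-2^{-(2d+1)}$, and for $S\subseteq V(G)$,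 $\alpha^u(S)=\prod_{y\in S}c_{|N^u(y)|}$. Identifying $S$ with the set of positive literals of its elements, $\mathbf{P}^u(S)$ is the set of paths $P$ of $T$ from $u$ to a leaf such that $S\subseteq A(P)$, where $A(P)$ is the set of literals labelling the edges of $P$. *)

theory Defs
  imports Complex_Main
begin

definition simple_graph :: "'v set \<Rightarrow> ('v \<Rightarrow> 'v \<Rightarrow> bool) \<Rightarrow> bool" where
  "simple_graph V E \<longleftrightarrow> finite V \<and> (\<forall>u v. E u v \<longrightarrow> u \<in> V \<and> v \<in> V)
     \<and> (\<forall>u v. E u v \<longrightarrow> E v u) \<and> (\<forall>u. \<not> E u u)"

text \<open>Literals are pairs (variable, value); assignments are sets of literals.
  Satisfying assignments of phi(G): total consistent assignments on V satisfying
  every clause (u or v) for each edge {u,v}.\<close>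
definition phi_sat :: "'v set \<Rightarrow> ('v \<Rightarrow> 'v \<Rightarrow> bool) \<Rightarrow> ('v \<times> bool) set set" where
  "phi_sat V E = {B. B \<subseteq> V \<times> UNIV \<and> (\<forall>v\<in>V. ((v, True) \<in> B) \<noteq> ((v, False) \<in> B))
     \<and> (\<forall>u v. E u v \<longrightarrow> (u, True) \<in> B \<or> (v, True) \<in> B)}"

definition count_restr :: "('v \<times> bool) set set \<Rightarrow> ('v \<times> bool) set \<Rightarrow> nat" where
  "count_restr F A = card {B \<in> F. A \<subseteq> B}"

text \<open>Decision trees: a node labelled by a variable has an optional child for the
  negative literal (first) and for the positive literal (second).\<close>
datatype 'v dtree = Leaf | Node 'v "'v dtree option" "'v dtree option"

definition child :: "bool \<Rightarrow> 'v dtree option \<Rightarrow> 'v dtree option \<Rightarrow> 'v dtree option" where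
  "child b c0 c1 = (if b then c1 else c0)"

text \<open>is_dt Vs F A t: t is a decision tree for F|_A, where F has variables Vs and
  satisfying assignments F (so F|_A has variables Vs minus the variables of A).\<close>
fun is_dt :: "'v set \<Rightarrow> ('v \<times> bool) set set \<Rightarrow> ('v \<times> bool) set \<Rightarrow> 'v dtree \<Rightarrow> bool" where
  "is_dt Vs F A Leaf = False"
| "is_dt Vs F A (Node x c0 c1) =
     ((\<exists>B\<in>F. A \<subseteq> B) \<and> x \<in> Vs - fst ` A \<and>
      (case c0 of
         None \<Rightarrow> \<not> (\<exists>B\<in>F. insert (x, False) A \<subseteq> B)
       | Some t \<Rightarrow> (\<exists>B\<in>F. insert (x, False) A \<subseteq> B) \<and>
           (if card (Vs - fst ` A) = 1 then t = Leaf else is_dt Vs F (insert (x, False) A) t)) \<and>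
      (case c1 of
         None \<Rightarrow> \<not> (\<exists>B\<in>F. insert (x, True) A \<subseteq> B)
       | Some t \<Rightarrow> (\<exists>B\<in>F. insert (x, True) A \<subseteq> B) \<and>
           (if card (Vs - fst ` A) = 1 then t = Leaf else is_dt Vs F (insert (x, True) A) t)))"

text \<open>Solution counting decision tree for phi(G): a decision tree for phi(G); its edge
  weights are then determined (see edge_weight / path_weight below).\<close>
definition scdt :: "'v set \<Rightarrow> ('v \<Rightarrow> 'v \<Rightarrow> bool) \<Rightarrow> 'v dtree \<Rightarrow> bool" where
  "scdt V E T = is_dt V (phi_sat V E) {} T"

text \<open>Nodes are addressed by the list of edge directions (False = negative literal,
  True = positive literal) from the root.\<close>
fun subtree :: "'v dtree \<Rightarrow> bool list \<Rightarrow> 'v dtree option" where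
  "subtree t [] = Some t"
| "subtree Leaf (b # bs) = None"
| "subtree (Node x c0 c1) (b # bs) =
     (case child b c0 c1 of None \<Rightarrow> None | Some t \<Rightarrow> subtree t bs)"

fun lits :: "'v dtree \<Rightarrow> bool list \<Rightarrow> ('v \<times> bool) set" where
  "lits t [] = {}"
| "lits Leaf (b # bs) = {}"
| "lits (Node x c0 c1) (b # bs) =
     insert (x, b) (case child b c0 c1 of None \<Rightarrow> {} | Some t \<Rightarrow> lits t bs)"

text \<open>Weight of the path that starts at node p and follows directions q:
  product of the edge weights |F|_{A_w \<union> {l}}| / |F|_{A_w}|.\<close>
definition path_weight :: "('v \<times> bool) set set \<Rightarrow> 'v dtree \<Rightarrow> bool list \<Rightarrow> bool list \<Rightarrow> real" where
  "path_weight F T p q = (\<Prod>i<length q.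
      real (count_restr F (lits T (p @ take (Suc i) q))) / real (count_restr F (lits T (p @ take i q))))"

definition paths_S :: "'v dtree \<Rightarrow> bool list \<Rightarrow> 'v set \<Rightarrow> bool list set" where
  "paths_S T p S = {q. subtree T (p @ q) = Some Leaf \<and>
      (\<forall>t'. subtree T p = Some t' \<longrightarrow> (\<lambda>y. (y, True)) ` S \<subseteq> lits t' q)}"

definition weight_paths :: "('v \<times> bool) set set \<Rightarrow> 'v dtree \<Rightarrow> bool list \<Rightarrow> bool list set \<Rightarrow> real" where
  "weight_paths F T p Q = (\<Sum>q\<in>Q. path_weight F T p q)"

definition forced :: "('v \<Rightarrow> 'v \<Rightarrow> bool) \<Rightarrow> ('v \<times> bool) set \<Rightarrow> 'v \<Rightarrow> bool" where
  "forced E A y \<longleftrightarrow> (\<exists>z. E y z \<and> (z, False) \<in> A)"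

definition Nu :: "('v \<Rightarrow> 'v \<Rightarrow> bool) \<Rightarrow> ('v \<times> bool) set \<Rightarrow> 'v \<Rightarrow> 'v set" where
  "Nu E A y = {z. E y z \<and> z \<notin> fst ` A \<and> \<not> forced E A z}"

definition c_const :: "nat \<Rightarrow> real" where
  "c_const d = 1 - 1 / 2 ^ (2 * d + 1)"

definition alpha :: "('v \<Rightarrow> 'v \<Rightarrow> bool) \<Rightarrow> ('v \<times> bool) set \<Rightarrow> 'v set \<Rightarrow> real" where
  "alpha E A S = (\<Prod>y\<in>S. c_const (card (Nu E A y)))"

end

(* Write F for the solutions of phi(G) and A for A_u. A path P from u to a leaf has weight
   |F|_{A \<union> A(P)}| / |F|_A| (the edge weights telescope), and two distinct such paths take
   complementary literals where they split, so the solutions extending them are disjoint; for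
   P in P^u(S) they all extend the positive literals of S, whence
   weight(P^u(S)) \<le> |F|_{A \<union> S}| / |F|_A|.
   For a free y with d free neighbours, setting y to 0 and these neighbours to 1 maps the
   solutions with y = 1 to those with y = 0 and is at most 2^d-to-one, so the solutions with
   y = 1 are at most a fraction 2^d / (2^d + 1) \<le> c_d of all. Since S is independent, fixing
   some of its elements to 1 changes neither forcedness nor free neighbourhoods of the others,
   and the bound iterates to alpha^u(S). *)

theory Submission
  imports Defs
begin

abbreviation pos_lits :: "'v set \<Rightarrow> ('v \<times> bool) set" where
  "pos_lits S \<equiv> (\<lambda>y. (y, True)) ` S"

lemma finite_phi_sat: "finite V \<Longrightarrow> finite (phi_sat V E)"
  by (rule finite_subset[of _ "Pow (V \<times> UNIV)"]) (auto simp: phi_sat_def)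

lemma count_restr_split:
  assumes "finite V" "y \<in> V"
  shows "count_restr (phi_sat V E) A
    = count_restr (phi_sat V E) (insert (y, True) A) + count_restr (phi_sat V E) (insert (y, False) A)"
proof -
  let ?F = "phi_sat V E"
  have "{B \<in> ?F. A \<subseteq> B}
      = {B \<in> ?F. insert (y, True) A \<subseteq> B} \<union> {B \<in> ?F. insert (y, False) A \<subseteq> B}"
    and "{B \<in> ?F. insert (y, True) A \<subseteq> B} \<inter> {B \<in> ?F. insert (y, False) A \<subseteq> B} = {}"
    using assms(2) by (auto simp: phi_sat_def)
  then show ?thesis
    unfolding count_restr_def using finite_phi_sat[OF assms(1)] by (simp add: card_Un_disjoint)
qed

definition flip_assignment ::
    "('v \<Rightarrow> 'v \<Rightarrow> bool) \<Rightarrow> ('v \<times> bool) set \<Rightarrow> 'v \<Rightarrow> ('v \<times> bool) set \<Rightarrow> ('v \<times> bool) set" where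
  "flip_assignment E A y B =
     (B - {(y, True)} - (\<lambda>z. (z, False)) ` Nu E A y) \<union> {(y, False)} \<union> pos_lits (Nu E A y)"

text \<open>Either A sets v to 1 (it cannot set it to 0, as y is not forced), or A forces v.\<close>
lemma phi_sat_nbr_notin_Nu_true:
  assumes sg: "simple_graph V E" and nf: "\<not> forced E A y"
    and B: "B \<in> phi_sat V E" "A \<subseteq> B" and v: "E y v" "v \<notin> Nu E A y"
  shows "(v, True) \<in> B"
proof -
  have "v \<in> fst ` A \<or> forced E A v" using v by (auto simp: Nu_def)
  then show ?thesis
  proof
    assume "v \<in> fst ` A"
    then obtain b where "(v, b) \<in> A" by force
    moreover have "(v, False) \<notin> A" using nf v(1) by (auto simp: forced_def)
    ultimately have "(v, True) \<in> A" by (cases b) auto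
    then show ?thesis using B(2) by auto
  next
    assume "forced E A v"
    then obtain w where w: "E v w" "(w, False) \<in> A" by (auto simp: forced_def)
    then have "w \<in> V" using sg by (auto simp: simple_graph_def)
    then have "(w, True) \<notin> B" using w(2) B by (auto simp: phi_sat_def)
    then show ?thesis using B(1) w(1) by (auto simp: phi_sat_def)
  qed
qed

lemma flip_assignment_phi_sat:
  assumes sg: "simple_graph V E" and yV: "y \<in> V" and yA: "y \<notin> fst ` A" and nf: "\<not> forced E A y"
    and B: "B \<in> phi_sat V E" "insert (y, True) A \<subseteq> B"
  shows "flip_assignment E A y B \<in> phi_sat V E" "insert (y, False) A \<subseteq> flip_assignment E A y B"
proof -
  let ?N = "Nu E A y" and ?B' = "flip_assignment E A y B"
  have EV: "\<And>u v. E u v \<Longrightarrow> u \<in> V \<and> v \<in> V" and Esym: "\<And>u v. E u v \<Longrightarrow> E v u"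
    and Eirr: "\<And>u. \<not> E u u" using sg by (auto simp: simple_graph_def)
  have nbr_true: "(v, True) \<in> B" if "E y v" "v \<notin> ?N" for v
    using phi_sat_nbr_notin_Nu_true[OF sg nf B(1)] B(2) that by blast
  have Bsub: "B \<subseteq> V \<times> UNIV" and Bcons: "\<forall>v\<in>V. ((v, True) \<in> B) \<noteq> ((v, False) \<in> B)"
    and Bcl: "\<forall>u v. E u v \<longrightarrow> (u, True) \<in> B \<or> (v, True) \<in> B"
    using B(1) by (auto simp: phi_sat_def)
  have yN: "y \<notin> ?N" using Eirr by (auto simp: Nu_def)
  have NV: "?N \<subseteq> V" using EV by (auto simp: Nu_def)
  have "\<forall>v\<in>V. ((v, True) \<in> ?B') \<noteq> ((v, False) \<in> ?B')"
    using Bcons yN by (auto simp: flip_assignment_def)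
  moreover have "(u, True) \<in> ?B' \<or> (v, True) \<in> ?B'" if uv: "E u v" for u v
  proof -
    have kept: "(w, True) \<in> ?B'" if "(w, True) \<in> B \<or> w \<in> ?N" "w \<noteq> y" for w
      using that by (auto simp: flip_assignment_def)
    consider "u = y" | "v = y" | "u \<noteq> y" "v \<noteq> y" by blast
    then show ?thesis
    proof cases
      case 1
      then show ?thesis using kept[of v] nbr_true[of v] uv Eirr by blast
    next
      case 2
      then show ?thesis using kept[of u] nbr_true[of u] Esym[OF uv] Eirr by blast
    next
      case 3
      then show ?thesis using kept Bcl uv by blast
    qed
  qed
  moreover have "?B' \<subseteq> V \<times> UNIV" using Bsub NV yV by (auto simp: flip_assignment_def)
  ultimately show "?B' \<in> phi_sat V E" by (auto simp: phi_sat_def)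
  have "A \<inter> (\<lambda>z. (z, False)) ` ?N = {}" "(y, True) \<notin> A"
    using yA by (force simp: Nu_def)+
  then show "insert (y, False) A \<subseteq> ?B'" using B(2) by (auto simp: flip_assignment_def)
qed

lemma flip_assignment_determines:
  assumes "B \<in> phi_sat V E" "B' \<in> phi_sat V E" "(y, True) \<in> B" "(y, True) \<in> B'" "y \<in> V"
    and "flip_assignment E A y B = flip_assignment E A y B'"
    and "{z \<in> Nu E A y. (z, True) \<in> B} = {z \<in> Nu E A y. (z, True) \<in> B'}"
  shows "B = B'"
proof (rule set_eqI)
  fix l :: "'a \<times> bool"
  obtain v b where l: "l = (v, b)" by force
  have sub: "B \<subseteq> V \<times> UNIV" "B' \<subseteq> V \<times> UNIV"
    and cons: "\<forall>v\<in>V. ((v, True) \<in> B) \<noteq> ((v, False) \<in> B)" "\<forall>v\<in>V. ((v, True) \<in> B') \<noteq> ((v, False) \<in> B')"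
    using assms(1,2) by (auto simp: phi_sat_def)
  consider "v \<notin> V" | "v = y" | "v \<in> Nu E A y" "v \<in> V" | "v \<noteq> y" "v \<notin> Nu E A y"
    by blast
  then show "l \<in> B \<longleftrightarrow> l \<in> B'"
  proof cases
    case 1
    then show ?thesis using sub l by auto
  next
    case 2
    then show ?thesis using cons assms(3-5) l by (cases b) auto
  next
    case 3
    then have "((v, True) \<in> B) = ((v, True) \<in> B')" using assms(7) by blast
    then show ?thesis using cons 3 l by (cases b) auto
  next
    case 4
    then have "(l \<in> B) = (l \<in> flip_assignment E A y B)" "(l \<in> B') = (l \<in> flip_assignment E A y B')"
      using l by (auto simp: flip_assignment_def)
    then show ?thesis using assms(6) by simp
  qed
qed

lemma count_pos_le_pow2_count_neg:
  assumes sg: "simple_graph V E" and yV: "y \<in> V" and yA: "y \<notin> fst ` A" and nf: "\<not> forced E A y"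
  shows "count_restr (phi_sat V E) (insert (y, True) A)
    \<le> 2 ^ card (Nu E A y) * count_restr (phi_sat V E) (insert (y, False) A)"
proof -
  let ?F = "phi_sat V E" and ?N = "Nu E A y"
  define Xpos where "Xpos = {B \<in> ?F. insert (y, True) A \<subseteq> B}"
  define Xneg where "Xneg = {B \<in> ?F. insert (y, False) A \<subseteq> B}"
  define g where "g B = (flip_assignment E A y B, {z \<in> ?N. (z, True) \<in> B})" for B
  have finV: "finite V" using sg by (simp add: simple_graph_def)
  have finN: "finite ?N"
    using sg by (intro finite_subset[OF _ finV]) (auto simp: Nu_def simple_graph_def)
  have "inj_on g Xpos"
    using flip_assignment_determines[OF _ _ _ _ yV] by (intro inj_onI) (auto simp: g_def Xpos_def)
  moreover have "g ` Xpos \<subseteq> Xneg \<times> Pow ?N"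
    using flip_assignment_phi_sat[OF sg yV yA nf] by (auto simp: g_def Xpos_def Xneg_def)
  moreover have "finite (Xneg \<times> Pow ?N)"
    using finite_phi_sat[OF finV] finN by (simp add: Xneg_def)
  ultimately have "card Xpos \<le> card (Xneg \<times> Pow ?N)" by (rule card_inj_on_le)
  also have "\<dots> = 2 ^ card ?N * card Xneg" by (simp add: card_cartesian_product card_Pow finN)
  finally show ?thesis by (simp add: count_restr_def Xpos_def Xneg_def)
qed

lemma c_const_nonneg: "c_const d \<ge> 0"
proof -
  have "(1::real) \<le> 2 ^ (2 * d + 1)" by (rule one_le_power) simp
  then show ?thesis by (simp add: c_const_def)
qed

lemma alpha_nonneg: "alpha E A S \<ge> 0"
  unfolding alpha_def by (rule prod_nonneg) (simp add: c_const_nonneg)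

lemma le_c_const_mult:
  fixes a b :: real
  assumes "0 \<le> b" "a \<le> 2 ^ d * b"
  shows "a \<le> c_const d * (a + b)"
proof -
  define k :: real where "k = 2 ^ d"
  have k1: "1 \<le> k" by (simp add: k_def)
  have "(2::real) ^ (2 * d + 1) = 2 * (2 ^ d * 2 ^ d)"
    by (simp add: power_add power_mult mult.commute power2_eq_square)
  then have pow: "(2::real) ^ (2 * d + 1) = 2 * k * k" by (simp add: k_def)
  have "k \<le> k * k" using k1 by (simp add: mult_le_cancel_left1)
  then have "k + 1 \<le> 2 * k * k" using k1 by linarith
  then have "(k + 1) * b \<le> (2 * k * k) * b" using assms(1) by (rule mult_right_mono)
  then have "a + b \<le> (2 * k * k) * b" using assms(2) by (simp add: k_def algebra_simps)
  then have "(a + b) / (2 * k * k) \<le> b" using k1 by (simp add: divide_le_eq mult.commute)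
  then have "a \<le> (a + b) - (a + b) / (2 * k * k)" by linarith
  also have "\<dots> = c_const d * (a + b)" unfolding c_const_def pow by (simp add: algebra_simps)
  finally show ?thesis .
qed

lemma count_insert_pos_le:
  assumes sg: "simple_graph V E" and yV: "y \<in> V" and yA: "y \<notin> fst ` A" and nf: "\<not> forced E A y"
  shows "real (count_restr (phi_sat V E) (insert (y, True) A))
    \<le> c_const (card (Nu E A y)) * real (count_restr (phi_sat V E) A)"
proof -
  let ?cnt = "\<lambda>A. real (count_restr (phi_sat V E) A)"
  have "?cnt (insert (y, True) A) \<le> 2 ^ card (Nu E A y) * ?cnt (insert (y, False) A)"
    using count_pos_le_pow2_count_neg[OF assms]
    by (metis of_nat_le_iff of_nat_mult of_nat_numeral of_nat_power)
  then have "?cnt (insert (y, True) A)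
      \<le> c_const (card (Nu E A y)) * (?cnt (insert (y, True) A) + ?cnt (insert (y, False) A))"
    by (rule le_c_const_mult[rotated]) simp
  also have "?cnt (insert (y, True) A) + ?cnt (insert (y, False) A) = ?cnt A"
    using count_restr_split[OF _ yV, of E A] sg by (simp add: simple_graph_def)
  finally show ?thesis .
qed

lemma forced_Un_pos_lits: "forced E (A \<union> pos_lits P) z = forced E A z"
  unfolding forced_def by auto

lemma Nu_Un_pos_lits: "\<forall>z\<in>P. \<not> E y z \<Longrightarrow> Nu E (A \<union> pos_lits P) y = Nu E A y"
  unfolding Nu_def forced_Un_pos_lits by auto

lemma count_pos_lits_le_alpha:
  assumes sg: "simple_graph V E" and fin: "finite S" and sub: "S \<subseteq> V"
    and indep: "\<forall>y\<in>S. \<forall>y'\<in>S. y \<noteq> y' \<longrightarrow> \<not> E y y'"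
    and free: "\<forall>y\<in>S. y \<notin> fst ` A \<and> \<not> forced E A y"
  shows "real (count_restr (phi_sat V E) (A \<union> pos_lits S)) \<le> alpha E A S * real (count_restr (phi_sat V E) A)"
  using fin sub indep free
proof (induction S rule: finite_induct)
  case empty
  then show ?case by (simp add: alpha_def)
next
  case (insert y S)
  let ?A' = "A \<union> pos_lits S" and ?cnt = "\<lambda>A. real (count_restr (phi_sat V E) A)"
  have y_free: "y \<notin> fst ` ?A'" "\<not> forced E ?A' y"
    using insert.prems(3) insert.hyps(2) by (auto simp: forced_Un_pos_lits)
  have "Nu E ?A' y = Nu E A y"
    using insert.prems(2) insert.hyps(2) by (intro Nu_Un_pos_lits) auto
  then have "?cnt (A \<union> pos_lits (insert y S)) \<le> c_const (card (Nu E A y)) * ?cnt ?A'"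
    using count_insert_pos_le[OF sg _ y_free] insert.prems(1) by simp
  also have "\<dots> \<le> c_const (card (Nu E A y)) * (alpha E A S * ?cnt A)"
    using insert by (intro mult_left_mono c_const_nonneg) auto
  also have "\<dots> = alpha E A (insert y S) * ?cnt A"
    using insert.hyps by (simp add: alpha_def)
  finally show ?case .
qed

lemma subtree_append:
  "subtree t (p @ q) = (case subtree t p of None \<Rightarrow> None | Some s \<Rightarrow> subtree s q)"
proof (induction p arbitrary: t)
  case Nil
  then show ?case by simp
next
  case (Cons b p)
  then show ?case by (cases t) (auto split: option.splits)
qed

lemma lits_append: "subtree t p = Some s \<Longrightarrow> lits t (p @ q) = lits t p \<union> lits s q"
proof (induction p arbitrary: t)
  case Nil
  then show ?case by simp
next
  case (Cons b p)
  then show ?case by (cases t) (auto split: option.splits)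
qed

lemma is_dt_child:
  assumes "is_dt Vs F A (Node x c0 c1)" "child b c0 c1 = Some t"
  shows "x \<in> Vs - fst ` A"
    and "if card (Vs - fst ` A) = 1 then t = Leaf else is_dt Vs F (insert (x, b) A) t"
  using assms by (cases b; auto simp: child_def)+

lemma is_dt_subtree:
  assumes "is_dt Vs F A t" "subtree t q = Some s"
  shows "fst ` lits t q \<subseteq> Vs - fst ` A \<and> (s \<noteq> Leaf \<longrightarrow> is_dt Vs F (A \<union> lits t q) s)"
  using assms
proof (induction q arbitrary: t A)
  case Nil
  then show ?case by simp
next
  case (Cons b q)
  then obtain x c0 c1 where t: "t = Node x c0 c1" by (cases t) auto
  with Cons.prems(2) obtain t1 where ch: "child b c0 c1 = Some t1" and st: "subtree t1 q = Some s"
    by (auto split: option.splits)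
  have lt: "lits t (b # q) = insert (x, b) (lits t1 q)" using t ch by simp
  note child = is_dt_child[OF Cons.prems(1)[unfolded t] ch]
  show ?case
  proof (cases "card (Vs - fst ` A) = 1")
    case True
    then have "q = [] \<and> s = Leaf" using child(2) st by (cases q) auto
    then show ?thesis using lt child(1) by simp
  next
    case False
    then have "is_dt Vs F (insert (x, b) A) t1" using child(2) by simp
    from Cons.IH[OF this st] show ?thesis using lt child(1) by auto
  qed
qed

lemma leaf_paths_complementary:
  assumes "is_dt Vs F A t" "subtree t q = Some Leaf" "subtree t q' = Some Leaf" "q \<noteq> q'"
  shows "\<exists>v b. (v, b) \<in> lits t q \<and> (v, \<not> b) \<in> lits t q'"
  using assms
proof (induction q arbitrary: t A q')
  case Nil
  then show ?case by simp
next
  case (Cons b q)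
  then obtain x c0 c1 where t: "t = Node x c0 c1" by (cases t) auto
  obtain b' q'' where q': "q' = b' # q''" using Cons.prems(1,3) by (cases q') auto
  from Cons.prems(2) t obtain t1 where ch: "child b c0 c1 = Some t1"
    and st: "subtree t1 q = Some Leaf" by (auto split: option.splits)
  from Cons.prems(3) t q' obtain t1' where ch': "child b' c0 c1 = Some t1'"
    and st': "subtree t1' q'' = Some Leaf" by (auto split: option.splits)
  have lt: "lits t (b # q) = insert (x, b) (lits t1 q)" and lt': "lits t q' = insert (x, b') (lits t1' q'')"
    using t q' ch ch' by simp_all
  show ?case
  proof (cases "b = b'")
    case False
    then show ?thesis using lt lt' by (intro exI[of _ x] exI[of _ b]) auto
  next
    case True
    then have t1': "t1' = t1" and "q \<noteq> q''" using ch ch' Cons.prems(4) q' by auto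
    note child = is_dt_child(2)[OF Cons.prems(1)[unfolded t] ch]
    show ?thesis
    proof (cases "card (Vs - fst ` A) = 1")
      case True
      then have "q = [] \<and> q'' = []" using child st st' t1' by (cases q; cases q'') auto
      then show ?thesis using \<open>q \<noteq> q''\<close> by simp
    next
      case False
      then have "is_dt Vs F (insert (x, b) A) t1" using child by simp
      from Cons.IH[OF this st st'[unfolded t1'] \<open>q \<noteq> q''\<close>] show ?thesis
        using lt lt' t1' by auto
    qed
  qed
qed

lemma prod_ratios_le:
  fixes a :: "nat \<Rightarrow> real"
  assumes "\<And>i. a i \<ge> 0"
  shows "(\<Prod>i<Suc n. a (Suc i) / a i) \<le> a (Suc n) / a 0"
proof (induction n)
  case 0
  then show ?case by simp
next
  case (Suc n)
  have "(\<Prod>i<Suc (Suc n). a (Suc i) / a i) = (\<Prod>i<Suc n. a (Suc i) / a i) * (a (Suc (Suc n)) / a (Suc n))"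
    by simp
  also have "\<dots> \<le> a (Suc n) / a 0 * (a (Suc (Suc n)) / a (Suc n))"
    using Suc assms by (intro mult_right_mono) auto
  also have "\<dots> \<le> a (Suc (Suc n)) / a 0"
    using assms[of 0] assms[of "Suc (Suc n)"] by (cases "a (Suc n) = 0") auto
  finally show ?case .
qed

lemma path_weight_le_ratio:
  assumes "subtree T p = Some s" "q \<noteq> []"
  shows "path_weight F T p q
    \<le> real (count_restr F (lits T p \<union> lits s q)) / real (count_restr F (lits T p))"
proof -
  obtain n where n: "length q = Suc n" using assms(2) by (cases q) auto
  define a where "a i = real (count_restr F (lits T (p @ take i q)))" for i
  have "path_weight F T p q = (\<Prod>i<Suc n. a (Suc i) / a i)"
    unfolding path_weight_def a_def n by simp
  also have "\<dots> \<le> a (Suc n) / a 0" by (rule prod_ratios_le) (simp add: a_def)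
  also have "a (Suc n) = real (count_restr F (lits T p \<union> lits s q))"
    unfolding a_def n[symmetric] using lits_append[OF assms(1)] by simp
  finally show ?thesis by (simp add: a_def)
qed

lemma mem_paths_S:
  assumes "subtree T p = Some s"
  shows "q \<in> paths_S T p S \<longleftrightarrow> subtree s q = Some Leaf \<and> pos_lits S \<subseteq> lits s q"
  using assms by (simp add: paths_S_def subtree_append)

lemma paths_S_empty_if_assigned:
  assumes "is_dt Vs F {} T" "subtree T p = Some s" "y \<in> S" "y \<in> fst ` lits T p"
  shows "paths_S T p S = {}"
proof -
  have "y \<notin> fst ` lits s q" if "subtree s q = Some Leaf" for q
  proof -
    have "s \<noteq> Leaf \<or> q = []" using that by (cases q; cases s) auto
    then show ?thesis
      using is_dt_subtree[OF assms(1,2)] is_dt_subtree[of Vs F "lits T p" s q Leaf] that assms(4)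
      by auto
  qed
  then show ?thesis using assms(2,3) by (force simp: mem_paths_S)
qed

lemma weight_paths_S_le_ratio:
  assumes dt: "is_dt Vs F {} T" and u: "subtree T p = Some (Node x c0 c1)" and "finite F"
    and consistent: "\<forall>B\<in>F. \<forall>v. (v, True) \<in> B \<longrightarrow> (v, False) \<notin> B"
  shows "weight_paths F T p (paths_S T p S)
    \<le> real (count_restr F (lits T p \<union> pos_lits S)) / real (count_restr F (lits T p))"
proof (cases "finite (paths_S T p S)")
  case False
  then show ?thesis by (simp add: weight_paths_def)
next
  case finQ: True
  let ?s = "Node x c0 c1" and ?A = "lits T p" and ?Q = "paths_S T p S"
  define X where "X q = {B \<in> F. ?A \<union> lits ?s q \<subseteq> B}" for q
  have Q: "subtree ?s q = Some Leaf" "pos_lits S \<subseteq> lits ?s q" if "q \<in> ?Q" for q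
    using that u by (simp_all add: mem_paths_S)
  have dt_s: "is_dt Vs F ?A ?s" using is_dt_subtree[OF dt u] by simp
  have disj: "X q \<inter> X q' = {}" if qq': "q \<in> ?Q" "q' \<in> ?Q" "q \<noteq> q'" for q q'
  proof -
    obtain v b where "(v, b) \<in> lits ?s q" "(v, \<not> b) \<in> lits ?s q'"
      using leaf_paths_complementary[OF dt_s Q(1)[OF qq'(1)] Q(1)[OF qq'(2)] qq'(3)] by blast
    then have "(v, True) \<in> B \<and> (v, False) \<in> B" if "B \<in> X q \<inter> X q'" for B
      using that by (cases b) (auto simp: X_def)
    then show ?thesis using consistent by (auto simp: X_def)
  qed
  have "weight_paths F T p ?Q \<le> (\<Sum>q\<in>?Q. real (count_restr F (?A \<union> lits ?s q)) / real (count_restr F ?A))"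
    unfolding weight_paths_def
  proof (rule sum_mono)
    fix q assume "q \<in> ?Q"
    then have "q \<noteq> []" using Q(1) by fastforce
    then show "path_weight F T p q \<le> real (count_restr F (?A \<union> lits ?s q)) / real (count_restr F ?A)"
      by (rule path_weight_le_ratio[OF u])
  qed
  also have "\<dots> = real (\<Sum>q\<in>?Q. card (X q)) / real (count_restr F ?A)"
    by (simp add: sum_divide_distrib X_def count_restr_def)
  also have "(\<Sum>q\<in>?Q. card (X q)) = card (\<Union>q\<in>?Q. X q)"
    using card_UN_disjoint[OF finQ, of X] disj \<open>finite F\<close> by (simp add: X_def)
  also have "real (card (\<Union>q\<in>?Q. X q)) / real (count_restr F ?A)
      \<le> real (count_restr F (?A \<union> pos_lits S)) / real (count_restr F ?A)"
    using Q(2) \<open>finite F\<close> unfolding count_restr_def X_def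
    by (intro divide_right_mono of_nat_mono card_mono) auto
  finally show ?thesis .
qed

theorem theorem6:
  fixes V :: "'v set" and E :: "'v \<Rightarrow> 'v \<Rightarrow> bool" and T :: "'v dtree"
    and p :: "bool list" and x :: 'v and c0 c1 :: "'v dtree option" and S :: "'v set"
  assumes "simple_graph V E"
    and "\<forall>v\<in>V. \<exists>w. E v w"
    and "scdt V E T"
    and "subtree T p = Some (Node x c0 c1)"
    and "S \<subseteq> V"
    and "\<forall>y\<in>S. \<forall>y'\<in>S. y \<noteq> y' \<longrightarrow> \<not> E y y' \<and> \<not> (\<exists>z. E y z \<and> E y' z)"
    and "\<forall>y\<in>S. \<not> forced E (lits T p) y"
  shows "weight_paths (phi_sat V E) T p (paths_S T p S) \<le> alpha E (lits T p) S"
proof -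
  let ?F = "phi_sat V E" and ?A = "lits T p"
  have dt: "is_dt V ?F {} T" using assms(3) by (simp add: scdt_def)
  have finV: "finite V" using assms(1) by (simp add: simple_graph_def)
  show ?thesis
  proof (cases "\<exists>y\<in>S. y \<in> fst ` ?A")
    case True
    then have "paths_S T p S = {}" using paths_S_empty_if_assigned[OF dt assms(4)] by blast
    then show ?thesis by (simp add: weight_paths_def alpha_nonneg)
  next
    case False
    have "weight_paths ?F T p (paths_S T p S)
        \<le> real (count_restr ?F (?A \<union> pos_lits S)) / real (count_restr ?F ?A)"
      using finite_phi_sat[OF finV]
      by (intro weight_paths_S_le_ratio[OF dt assms(4)]) (auto simp: phi_sat_def)
    also have "\<dots> \<le> alpha E ?A S"
    proof -
      have "real (count_restr ?F (?A \<union> pos_lits S)) \<le> alpha E ?A S * real (count_restr ?F ?A)"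
        using False assms(5-7) finite_subset[OF assms(5) finV]
        by (intro count_pos_lits_le_alpha[OF assms(1)]) auto
      then show ?thesis using alpha_nonneg[of E ?A S] by (simp add: divide_le_eq)
    qed
    finally show ?thesis .
  qed
qed

end
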